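(* Suppose $U=\{(u,v,x): (u,x)\in V,\ v\in\mathbb{R}\}$ with $V$ a connected open set. Let $X = X_1 n + X_2\ell+\sum_i X_i m_i$ be a Killing vector field of $g$ on $U$ that is nowhere spacelike, i.e. $g(X,X)\le 0$ at every point of $U$ (for all values of $v$). Then: - $X_1$ is a constant $c$; - $X = c\,n + F_2\,\ell + \sum_i F_i\, m_i$, where $F_2,F_i$ are functions of $(u,x^3,\dots,x^N)$ only; - $2cF_2 + \sum_i F_i^2 \le 0$ on $V$.
   Context: Work on an open set $U$ with coordinates $(u,v,x^3,\dots,x^N)$, $N\ge 3$. The Lorentzian metric is $$g = 2\,du\,\big(dv + H\,du + \hat W_e\,dx^e\big) + g_{ef}\,dx^e dx^f,$$ where the indices $e,f$ run over $3,\dots,N$ and are summed. The functions $H,\hat W_e,g_{ef}$ depend only on $(u,x^3,\dots,x^N)$, not on $v$, and $(g_{ef})$ is positive definite. Then $\ell=\partial_v$ is a covariantly constant null vector. Choose functions $m^i_{\ e}(u,x)$, $i,e\in\{3,\dots,N\}$, with $g_{ef}=\sum_i m^i_{\ e}m^i_{\ f}$, and let $m_i^{\ e}$ be the inverse matrix, so that $\sum_e m^i_{\ e}m_j^{\ e}=\delta_{ij}$. The coframe is $m^1 = dv + H\,du+\hat W_e\,dx^e$, $m^2=du$, $m^i = m^i_{\ e}dx^e$, so that $g = 2m^1m^2+\sum_i (m^i)^2$. The dual frame vectors are $$\ell=\partial_v,\qquad n=\partial_u - H\,\partial_v,\qquad m_i = m_i^{\ e}\big(\partial_e-\hat W_e\,\partial_v\big).$$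 For a vector field $X$ we write $X = X_1 n + X_2\ell+\sum_i X_i m_i$. Equivalently $X_1=g(X,\ell)$, $X_2=g(X,n)$, $X_i=g(X,m_i)$, and $g(X,X)=2X_1X_2+\sum_i X_i^2$. *)

theory Defs
  imports "HOL-Analysis.Analysis"
begin

text \<open>Smooth (C-infinity) maps on a set: differentiable, and every directional
derivative is again smooth (greatest fixed point).\<close>
coinductive smooth_on :: "'a::real_normed_vector set \<Rightarrow> ('a \<Rightarrow> 'b::real_normed_vector) \<Rightarrow> bool"
  for S where
  smooth_onI: "f differentiable_on S \<Longrightarrow>
     (\<forall>h. smooth_on S (\<lambda>p. frechet_derivative f (at p) h)) \<Longrightarrow> smooth_on S f"

text \<open>Points and tangent vectors are triples (u, v, x) with x in R^(N-2).
The metric g = 2 du (dv + H du + W_e dx^e) + g_ef dx^e dx^f, with H, W, G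
functions of (u, x).\<close>
definition gmet ::
  "(real \<times> (real^'n) \<Rightarrow> real) \<Rightarrow> (real \<times> (real^'n) \<Rightarrow> real^'n) \<Rightarrow> (real \<times> (real^'n) \<Rightarrow> (real^'n^'n))
   \<Rightarrow> real \<times> real \<times> (real^'n) \<Rightarrow> real \<times> real \<times> (real^'n) \<Rightarrow> real \<times> real \<times> (real^'n) \<Rightarrow> real" where
  "gmet H W G p a b =
     (let u = fst p; x = snd (snd p);
          au = fst a; av = fst (snd a); ax = snd (snd a);
          bu = fst b; bv = fst (snd b); bx = snd (snd b)
      in au * bv + av * bu + 2 * H (u, x) * au * bu
         + au * (W (u, x) \<bullet> bx) + bu * (W (u, x) \<bullet> ax)
         + ax \<bullet> (G (u, x) *v bx))"

text \<open>Killing equation (Lie derivative of a metric field g along X vanishes),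
in coordinates on an open subset of a vector space:
(L_X g)_p(a,b) = D_p(g(a,b))(X p) + g_p(DX_p a, b) + g_p(a, DX_p b).\<close>
definition killing_on ::
  "'a::real_normed_vector set \<Rightarrow> ('a \<Rightarrow> 'a \<Rightarrow> 'a \<Rightarrow> real) \<Rightarrow> ('a \<Rightarrow> 'a) \<Rightarrow> bool" where
  "killing_on S g X \<longleftrightarrow>
     (\<forall>p\<in>S. \<forall>a b. frechet_derivative (\<lambda>q. g q a b) (at p) (X p)
        + g p (frechet_derivative X (at p) a) b + g p a (frechet_derivative X (at p) b) = 0)"

text \<open>Frame vectors: ell = d_v, n = d_u - H d_v,
m_i = m_i^e (d_e - W_e d_v) with m_i^e the inverse matrix of m^i_e = M $ i $ e.\<close>
definition ellv :: "real \<times> real \<times> (real^'n)" where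
  "ellv = (0, 1, 0)"

definition nvec :: "(real \<times> (real^'n) \<Rightarrow> real) \<Rightarrow> real \<times> (real^'n) \<Rightarrow> real \<times> real \<times> (real^'n)" where
  "nvec H q = (1, - H q, 0)"

definition mvec :: "(real \<times> (real^'n) \<Rightarrow> real^'n) \<Rightarrow> (real \<times> (real^'n) \<Rightarrow> (real^'n^'n))
     \<Rightarrow> real \<times> (real^'n) \<Rightarrow> 'n \<Rightarrow> real \<times> real \<times> (real^'n)" where
  "mvec W M q i =
     (0, - (\<Sum>e\<in>UNIV. matrix_inv (M q) $ e $ i * W q $ e), (\<chi> e. matrix_inv (M q) $ e $ i))"

end

theory Submission imports Defs begin

(* Write X = (A, B, Z) in the coordinates (u, v, x), let DX be the derivative
   of X and Xv = DX ell = dX/dv.  Since ell = d_v is parallel with constant components,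
   the Killing equation evaluated on (ell, b) reads  g(Xv, b) + (DX b)_u = 0.  With b = ell
   this gives Xv_u = 0, hence A is independent of v, hence so is its derivative, and then
   the same equation together with the definiteness of G shows that Xv is independent of v.
   So X is affine in v along every null line, and g(X, X) is a quadratic polynomial in v
   whose leading coefficient is |Xv_x|^2_G.  Causality for all v forces Xv_x = 0 and
   A Xv_v = 0, so that dA = -Xv_v du and d(A^2) = 0: A is a constant c on the connected
   domain, and then Xv_v = 0 as well.  Thus X does not depend on v, and expanding it in
   the null frame (n, ell, m_i) gives the claimed form, with g(X, X) = 2 c F2 + sum F_i^2. *)

lemma nonpos_quadratic_degenerate:
  fixes a b c :: real
  assumes nonpos: "\<forall>t. a + b * t + c * t\<^sup>2 \<le> 0" and "c \<ge> 0"
  shows "c = 0 \<and> b = 0"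
proof -
  have even_part: "a + c * t\<^sup>2 \<le> 0" for t
    using nonpos[rule_format, of t] nonpos[rule_format, of "- t"] by simp
  have c0: "c = 0"
  proof (rule ccontr)
    assume "c \<noteq> 0"
    with \<open>c \<ge> 0\<close> have "c * (sqrt ((\<bar>a\<bar> + 1) / c))\<^sup>2 = \<bar>a\<bar> + 1" by simp
    with even_part[of "sqrt ((\<bar>a\<bar> + 1) / c)"] show False by linarith
  qed
  have "b = 0"
  proof (rule ccontr)
    assume "b \<noteq> 0"
    with c0 nonpos[rule_format, of "(1 - a) / b"] show False by simp
  qed
  with c0 show ?thesis by simp
qed

lemma constant_velocity_line:
  fixes f :: "real \<Rightarrow> 'b::real_normed_vector"
  assumes "\<And>s. (f has_derivative (\<lambda>h. h *\<^sub>R y)) (at s)"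
  shows "f t = f 0 + t *\<^sub>R y"
proof -
  have "((\<lambda>s. f s - s *\<^sub>R y) has_derivative (\<lambda>h. 0)) (at s within UNIV)" for s
  proof -
    have "((\<lambda>s. s *\<^sub>R y) has_derivative (\<lambda>h. h *\<^sub>R y)) (at s)"
      by (auto intro!: derivative_eq_intros)
    from has_derivative_diff[OF assms this] show ?thesis by simp
  qed
  from has_derivative_zero_unique[OF convex_UNIV this, of t 0] show ?thesis
    by (simp add: algebra_simps)
qed

lemma derivative_translation_invariant:
  fixes f :: "'a::real_normed_vector \<Rightarrow> 'b::real_normed_vector"
  assumes "open S" "p \<in> S" "\<forall>q\<in>S. f (q + \<tau>) = f q"
    and "(f has_derivative D1) (at p)" "(f has_derivative D2) (at (p + \<tau>))"
  shows "D1 = D2"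
proof -
  have "((\<lambda>q. q + \<tau>) has_derivative (\<lambda>h. h)) (at p)"
    by (auto intro!: derivative_eq_intros)
  from has_derivative_compose[OF this assms(5)]
  have "((\<lambda>q. f (q + \<tau>)) has_derivative D2) (at p)" by simp
  then have "(f has_derivative D2) (at p)"
    by (rule has_derivative_transform_within_open[OF _ assms(1,2)]) (use assms(3) in auto)
  with assms(4) show ?thesis using has_derivative_unique by blast
qed

text \<open>A continuous real function on a connected set whose square is constant is
constant: its values lie in the finite set {c, -c}.\<close>
lemma constant_if_square_constant:
  fixes f :: "'a::topological_space \<Rightarrow> real"
  assumes "connected S" "continuous_on S f" "\<And>p q. p \<in> S \<Longrightarrow> q \<in> S \<Longrightarrow> (f p)\<^sup>2 = (f q)\<^sup>2"
  shows "\<exists>c. \<forall>p\<in>S. f p = c"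
proof (cases "S = {}")
  case False
  then obtain p0 where p0: "p0 \<in> S" by auto
  have "f ` S \<subseteq> {f p0, - f p0}"
    using assms(3)[OF _ p0] by (auto simp: power2_eq_iff)
  then have "finite (f ` S)" by (rule finite_subset) simp
  moreover have "connected (f ` S)" using assms(1,2) by (rule connected_continuous_image[rotated])
  ultimately obtain c where "f ` S = {c}" using p0 connected_finite_iff_sing by blast
  then show ?thesis by blast
qed simp

lemma smooth_on_differentiable_on: "smooth_on S f \<Longrightarrow> f differentiable_on S"
  by (erule smooth_on.cases) simp

definition slab :: "(real \<times> 'a) set \<Rightarrow> (real \<times> real \<times> 'a) set" where
  "slab V = {(u, v, x). (u, x) \<in> V}"

lemma slab_iff [simp]: "(u, v, x) \<in> slab V \<longleftrightarrow> (u, x) \<in> V"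
  by (simp add: slab_def)

lemma open_slab:
  fixes V :: "(real \<times> 'a::topological_space) set"
  assumes "open V" shows "open (slab V)"
proof -
  have "slab V = (\<lambda>p. (fst p, snd (snd p))) -` V" by (auto simp: slab_def)
  then show ?thesis by (auto intro!: continuous_open_vimage assms continuous_intros)
qed

lemma connected_slab:
  fixes V :: "(real \<times> 'a::topological_space) set"
  assumes "connected V" shows "connected (slab V)"
proof -
  let ?f = "\<lambda>z :: (real \<times> 'a) \<times> real. (fst (fst z), snd z, snd (fst z))"
  have "slab V = ?f ` (V \<times> UNIV)"
  proof (intro set_eqI iffI)
    fix p assume "p \<in> slab V"
    then obtain u v x where "p = (u, v, x)" "(u, x) \<in> V" by (auto simp: slab_def)
    then show "p \<in> ?f ` (V \<times> UNIV)" by (intro image_eqI[of _ _ "((u, x), v)"]) auto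
  qed (auto simp: slab_def)
  moreover have "connected (?f ` (V \<times> UNIV))"
    by (intro connected_continuous_image continuous_intros connected_Times assms connected_UNIV)
  ultimately show ?thesis by simp
qed

section \<open>Algebra of the metric and of the null frame\<close>

lemma gmet_ellv_left [simp]: "gmet H W G p ellv b = fst b"
  by (simp add: gmet_def ellv_def Let_def)

lemma gmet_ellv_right [simp]: "gmet H W G p a ellv = fst a"
  by (simp add: gmet_def ellv_def Let_def)

lemma gmet_no_u:
  "fst a = 0 \<Longrightarrow> gmet H W G (u, v, x) a b
     = fst (snd a) * fst b + fst b * (W (u, x) \<bullet> snd (snd a)) + snd (snd a) \<bullet> (G (u, x) *v snd (snd b))"
  by (simp add: gmet_def Let_def)

lemma gmet_diag:
  "gmet H W G (u, v, x) (a, b, z) (a, b, z) = 2 * a * (b + a * H (u, x) + W (u, x) \<bullet> z) + z \<bullet> (G (u, x) *v z)"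
  by (simp add: gmet_def Let_def algebra_simps)

text \<open>Along the line (a, b, z) + t (0, \<beta>, \<zeta>) the norm is a quadratic polynomial in t
with leading coefficient \<zeta> \<bullet> G \<zeta>; the metric itself does not depend on v.\<close>
lemma gmet_diag_line:
  "gmet H W G (u, v, x) (a, b + t * \<beta>, z + t *\<^sub>R \<zeta>) (a, b + t * \<beta>, z + t *\<^sub>R \<zeta>)
    = gmet H W G (u, 0, x) (a, b, z) (a, b, z)
      + (2 * a * \<beta> + 2 * a * (W (u, x) \<bullet> \<zeta>) + z \<bullet> (G (u, x) *v \<zeta>) + \<zeta> \<bullet> (G (u, x) *v z)) * t
      + (\<zeta> \<bullet> (G (u, x) *v \<zeta>)) * t\<^sup>2"
  by (simp add: gmet_diag algebra_simps inner_add_left inner_add_right power2_eq_square)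

lemma frame_norm: "(M *v z) \<bullet> (M *v z) = z \<bullet> ((transpose M ** M) *v z)"
  for M :: "real^'n^'n"
proof -
  have "z \<bullet> ((transpose M ** M) *v z) = z \<bullet> (transpose M *v (M *v z))"
    by (simp add: matrix_vector_mul_assoc)
  also have "\<dots> = (M *v z) \<bullet> (M *v z)"
    using dot_lmul_matrix[of "M *v z" M z] by (simp add: inner_commute)
  finally show ?thesis by simp
qed

text \<open>If M^T M is positive definite, M has trivial kernel, so matrix_inv M is a genuine
left inverse of M; this is what makes the m_i dual to the coframe m^i.\<close>
lemma frame_left_inverse:
  fixes M :: "real^'n^'n"
  assumes pos: "\<forall>y. y \<noteq> 0 \<longrightarrow> y \<bullet> ((transpose M ** M) *v y) > 0"
  shows "matrix_inv M ** M = mat 1"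
proof -
  have "\<forall>y. M *v y = 0 \<longrightarrow> y = 0"
    using pos frame_norm[of M] by (metis inner_zero_left less_irrefl)
  then have "invertible M" using matrix_left_invertible_ker invertible_left_inverse by blast
  then have "\<exists>A. M ** A = mat 1 \<and> A ** M = mat 1" by (simp add: invertible_def)
  then have "M ** matrix_inv M = mat 1 \<and> matrix_inv M ** M = mat 1"
    unfolding matrix_inv_def by (rule someI_ex)
  then show ?thesis by simp
qed

lemma mvec_combination:
  "(\<Sum>i\<in>UNIV. F $ i *\<^sub>R mvec W M q i)
     = (0, - (W q \<bullet> (matrix_inv (M q) *v F)), matrix_inv (M q) *v F)"
proof -
  have "fst (snd (\<Sum>i\<in>UNIV. F $ i *\<^sub>R mvec W M q i))
      = - (\<Sum>i\<in>UNIV. \<Sum>e\<in>UNIV. F $ i * (matrix_inv (M q) $ e $ i * W q $ e))"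
    by (simp add: snd_sum fst_sum mvec_def sum_distrib_left sum_negf)
  also have "\<dots> = - (W q \<bullet> (matrix_inv (M q) *v F))"
    by (subst sum.swap) (simp add: inner_vec_def matrix_vector_mult_def sum_distrib_left algebra_simps)
  finally show ?thesis
    by (simp add: prod_eq_iff fst_sum snd_sum mvec_def vec_eq_iff matrix_vector_mult_def algebra_simps)
qed

lemma frame_expansion:
  assumes "matrix_inv (M q) ** M q = mat 1"
  shows "(a, b, z) = a *\<^sub>R nvec H q + (b + a * H q + W q \<bullet> z) *\<^sub>R ellv
                     + (\<Sum>i\<in>UNIV. (M q *v z) $ i *\<^sub>R mvec W M q i)"
  using assms by (simp add: mvec_combination nvec_def ellv_def matrix_vector_mul_assoc)

lemma gmet_in_frame:
  fixes M :: "real \<times> (real^'n) \<Rightarrow> real^'n^'n"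
  assumes "G (u, x) = transpose (M (u, x)) ** M (u, x)"
  shows "gmet H W G (u, v, x) (a, b, z) (a, b, z)
           = 2 * a * (b + a * H (u, x) + W (u, x) \<bullet> z) + (\<Sum>i\<in>UNIV. ((M (u, x) *v z) $ i)\<^sup>2)"
  using frame_norm[of "M (u, x)" z] assms by (simp add: gmet_diag inner_vec_def power2_eq_square)

section \<open>Causal Killing fields\<close>

text \<open>A Killing field X of g on U that is nowhere spacelike; only differentiability of X
and definiteness of G are needed.\<close>
locale causal_killing_field =
  fixes V :: "(real \<times> (real^'n)) set"
    and H :: "real \<times> (real^'n) \<Rightarrow> real"
    and W :: "real \<times> (real^'n) \<Rightarrow> real^'n"
    and G :: "real \<times> (real^'n) \<Rightarrow> (real^'n^'n)"
    and X :: "real \<times> real \<times> (real^'n) \<Rightarrow> real \<times> real \<times> (real^'n)"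
  assumes V_open: "open V"
    and G_pos: "\<forall>q\<in>V. \<forall>y. y \<noteq> 0 \<longrightarrow> y \<bullet> (G q *v y) > 0"
    and X_differentiable: "X differentiable_on slab V"
    and X_killing: "killing_on (slab V) (gmet H W G) X"
    and X_causal: "\<forall>p\<in>slab V. gmet H W G p (X p) (X p) \<le> 0"
begin

definition DX :: "real \<times> real \<times> (real^'n) \<Rightarrow> real \<times> real \<times> (real^'n) \<Rightarrow> real \<times> real \<times> (real^'n)" where
  "DX p = frechet_derivative X (at p)"

definition Xv :: "real \<times> real \<times> (real^'n) \<Rightarrow> real \<times> real \<times> (real^'n)" where
  "Xv p = DX p ellv"

lemma G_definite: "q \<in> V \<Longrightarrow> y \<bullet> (G q *v y) = 0 \<Longrightarrow> y = 0"
  using G_pos less_irrefl by metis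

lemma X_has_derivative:
  assumes "p \<in> slab V"
  shows "(X has_derivative DX p) (at p)"
proof -
  have "X differentiable (at p within slab V)"
    using X_differentiable assms by (simp add: differentiable_on_def)
  then have "X differentiable (at p)"
    using at_within_open[OF assms open_slab[OF V_open]] by simp
  then show ?thesis unfolding DX_def by (simp add: frechet_derivative_works)
qed

lemma Xu_has_derivative: "p \<in> slab V \<Longrightarrow> ((\<lambda>q. fst (X q)) has_derivative (\<lambda>b. fst (DX p b))) (at p)"
  using has_derivative_fst[OF X_has_derivative] .

lemma killing_ellv:
  assumes "p \<in> slab V"
  shows "gmet H W G p (Xv p) b + fst (DX p b) = 0"
proof -
  have "frechet_derivative (\<lambda>q. gmet H W G q ellv b) (at p) (X p)
      + gmet H W G p (DX p ellv) b + gmet H W G p ellv (DX p b) = 0"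
    unfolding DX_def by (rule X_killing[unfolded killing_on_def, rule_format, OF assms])
  then show ?thesis by (simp add: Xv_def)
qed

lemma Xv_u_zero: "p \<in> slab V \<Longrightarrow> fst (Xv p) = 0"
  using killing_ellv[of p ellv] by (simp add: Xv_def)

lemma X_v_derivative:
  assumes "(u, x) \<in> V"
  shows "((\<lambda>s. X (u, s, x)) has_derivative (\<lambda>s. s *\<^sub>R Xv (u, t, x))) (at t)"
proof -
  have "((\<lambda>s. (u, s, x)) has_derivative (\<lambda>s. s *\<^sub>R ellv)) (at t)"
    by (auto intro!: derivative_eq_intros simp: ellv_def)
  from has_derivative_compose[OF this X_has_derivative]
  have "((\<lambda>s. X (u, s, x)) has_derivative (\<lambda>s. DX (u, t, x) (s *\<^sub>R ellv))) (at t)"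
    using assms by simp
  moreover have "linear (DX (u, t, x))"
    using X_has_derivative assms has_derivative_linear by fastforce
  ultimately show ?thesis by (simp add: Xv_def linear_cmul)
qed

text \<open>Since Xv has no u-component, the u-component of X, and hence its derivative, is
invariant under v-translations.\<close>
lemma Xu_v_invariant:
  assumes "(u, x) \<in> V"
  shows "fst (X (u, t, x)) = fst (X (u, t', x))"
proof -
  have "((\<lambda>s. fst (X (u, s, x))) has_derivative (\<lambda>h. 0)) (at s within UNIV)" for s
    using has_derivative_fst[OF X_v_derivative[OF assms, of s]] Xv_u_zero[of "(u, s, x)"] assms
    by simp
  from has_derivative_zero_unique[OF convex_UNIV this] show ?thesis by blast
qed

lemma DXu_v_invariant:
  assumes "(u, x) \<in> V"
  shows "fst (DX (u, t, x) b) = fst (DX (u, t', x) b)"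
proof -
  define \<tau> :: "real \<times> real \<times> (real^'n)" where "\<tau> = (0, t' - t, 0)"
  have "(\<lambda>b. fst (DX (u, t, x) b)) = (\<lambda>b. fst (DX ((u, t, x) + \<tau>) b))"
  proof (rule derivative_translation_invariant[OF open_slab[OF V_open], of "(u, t, x)"])
    show "\<forall>q\<in>slab V. fst (X (q + \<tau>)) = fst (X q)"
      by (auto simp: \<tau>_def slab_def intro: Xu_v_invariant)
  qed (use assms Xu_has_derivative in \<open>simp_all add: \<tau>_def\<close>)
  from fun_cong[OF this, of b] show ?thesis by (simp add: \<tau>_def)
qed

text \<open>Consequently g(Xv, b) is invariant for every b, and so is Xv, G being definite.\<close>
lemma Xv_v_invariant:
  assumes uxV: "(u, x) \<in> V"
  shows "Xv (u, t, x) = Xv (u, t', x)"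
proof -
  let ?Y1 = "Xv (u, t, x)" and ?Y2 = "Xv (u, t', x)"
  have pairing: "gmet H W G (u, t, x) ?Y1 b = gmet H W G (u, t', x) ?Y2 b" for b
    using killing_ellv[of "(u, t, x)" b] killing_ellv[of "(u, t', x)" b] DXu_v_invariant[OF uxV]
    by (simp add: uxV) (metis add_right_cancel)
  have u_zero: "fst ?Y1 = 0" "fst ?Y2 = 0" using Xv_u_zero uxV by simp_all
  define d where "d = snd (snd ?Y1) - snd (snd ?Y2)"
  have "d \<bullet> (G (u, x) *v d) = 0"
    using pairing[of "(0, 0, d)"] u_zero by (simp add: gmet_no_u d_def inner_diff_left)
  then have "d = 0" using G_definite[OF uxV] by blast
  then have x_eq: "snd (snd ?Y1) = snd (snd ?Y2)" by (simp add: d_def)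
  have "fst (snd ?Y1) = fst (snd ?Y2)"
    using pairing[of "(1, 0, 0)"] u_zero x_eq by (simp add: gmet_no_u)
  with u_zero x_eq show ?thesis by (simp add: prod_eq_iff)
qed

lemma X_affine_in_v:
  assumes "(u, x) \<in> V"
  shows "X (u, t, x) = X (u, 0, x) + t *\<^sub>R Xv (u, 0, x)"
  using X_v_derivative[OF assms] Xv_v_invariant[OF assms]
  by (intro constant_velocity_line) metis

lemma causal_line_constraints:
  assumes "p \<in> slab V"
  shows "snd (snd (Xv p)) = 0" "fst (X p) * fst (snd (Xv p)) = 0"
proof -
  obtain u t x where p: "p = (u, t, x)" and uxV: "(u, x) \<in> V"
    using assms by (cases p) auto
  obtain a b z where X0: "X (u, 0, x) = (a, b, z)" by (cases "X (u, 0, x)")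
  obtain \<beta> \<zeta> where Y0: "Xv (u, 0, x) = (0, \<beta>, \<zeta>)"
    using Xv_u_zero[of "(u, 0, x)"] uxV by (cases "Xv (u, 0, x)") auto
  define \<alpha> where "\<alpha> = gmet H W G (u, 0, x) (a, b, z) (a, b, z)"
  define \<gamma> where "\<gamma> = 2 * a * \<beta> + 2 * a * (W (u, x) \<bullet> \<zeta>) + z \<bullet> (G (u, x) *v \<zeta>) + \<zeta> \<bullet> (G (u, x) *v z)"
  have "\<forall>s. \<alpha> + \<gamma> * s + (\<zeta> \<bullet> (G (u, x) *v \<zeta>)) * s\<^sup>2 \<le> 0"
  proof
    fix s
    have "X (u, s, x) = (a, b + s * \<beta>, z + s *\<^sub>R \<zeta>)"
      using X_affine_in_v[OF uxV, of s] X0 Y0 by simp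
    moreover have "gmet H W G (u, s, x) (X (u, s, x)) (X (u, s, x)) \<le> 0"
      using X_causal uxV by simp
    ultimately show "\<alpha> + \<gamma> * s + (\<zeta> \<bullet> (G (u, x) *v \<zeta>)) * s\<^sup>2 \<le> 0"
      by (simp add: \<alpha>_def \<gamma>_def gmet_diag_line)
  qed
  moreover have "\<zeta> \<bullet> (G (u, x) *v \<zeta>) \<ge> 0"
    using G_pos uxV by (cases "\<zeta> = 0") (auto intro: less_imp_le)
  ultimately have "\<zeta> \<bullet> (G (u, x) *v \<zeta>) = 0 \<and> \<gamma> = 0" by (rule nonpos_quadratic_degenerate)
  then have \<zeta>0: "\<zeta> = 0" using G_definite[OF uxV] by blast
  with \<open>\<zeta> \<bullet> (G (u, x) *v \<zeta>) = 0 \<and> \<gamma> = 0\<close> have "a * \<beta> = 0" by (simp add: \<gamma>_def)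
  with \<zeta>0 show "snd (snd (Xv p)) = 0" "fst (X p) * fst (snd (Xv p)) = 0"
    using Xv_v_invariant[OF uxV, of t 0] Xu_v_invariant[OF uxV, of t 0] X0 Y0 p by simp_all
qed

lemma DXu_formula: "p \<in> slab V \<Longrightarrow> fst (DX p b) = - (fst (snd (Xv p)) * fst b)"
  using killing_ellv[of p b] Xv_u_zero[of p] causal_line_constraints(1)[of p]
  by (cases p) (simp add: gmet_no_u)

text \<open>So d(X_u^2) = -2 X_u Xv_v du = 0, and X_u is constant on the connected domain.\<close>
lemma Xu_constant:
  assumes "connected V"
  obtains c where "\<forall>p\<in>slab V. fst (X p) = c"
proof -
  have "continuous_on (slab V) (\<lambda>p. fst (X p))"
    using Xu_has_derivative has_derivative_continuous by (blast intro: continuous_at_imp_continuous_on)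
  moreover have "(fst (X p))\<^sup>2 = (fst (X q))\<^sup>2" if "p \<in> slab V" "q \<in> slab V" for p q
  proof (rule has_derivative_zero_unique_connected[OF open_slab[OF V_open] connected_slab[OF assms] _ that])
    fix z assume z: "z \<in> slab V"
    have "fst (X z) * fst (DX z b) = 0" for b
      using DXu_formula[OF z, of b] causal_line_constraints(2)[OF z] by (simp add: algebra_simps)
    then have vanish: "(\<lambda>b. fst (X z) * fst (DX z b) + fst (DX z b) * fst (X z)) = (\<lambda>b. 0)"
      by (simp add: fun_eq_iff mult.commute)
    show "((\<lambda>p. (fst (X p))\<^sup>2) has_derivative (\<lambda>b. 0)) (at z)"
      using has_derivative_mult[OF Xu_has_derivative[OF z] Xu_has_derivative[OF z]]
      unfolding power2_eq_square vanish .
  qed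
  ultimately show ?thesis
    using constant_if_square_constant[OF connected_slab[OF assms]] that by blast
qed

text \<open>With X_u constant its differential vanishes, so Xv_v = 0 and Xv = 0 altogether:
X is invariant under v-translations.\<close>
lemma X_v_invariant:
  assumes "connected V" "(u, x) \<in> V"
  shows "X (u, t, x) = X (u, 0, x)"
proof -
  obtain c where c: "\<forall>p\<in>slab V. fst (X p) = c" using Xu_constant[OF assms(1)] .
  let ?p = "(u, 0, x)"
  have p: "?p \<in> slab V" using assms(2) by simp
  have "((\<lambda>q. fst (X q)) has_derivative (\<lambda>h. 0)) (at ?p)"
    by (rule has_derivative_transform_within_open[OF _ open_slab[OF V_open] p, of "\<lambda>q. c"])
       (use c in auto)
  then have "(\<lambda>b. fst (DX ?p b)) = (\<lambda>h. 0)"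
    using has_derivative_unique[OF Xu_has_derivative[OF p]] by blast
  then have "fst (snd (Xv ?p)) = 0"
    using DXu_formula[OF p, of "(1, 0, 0)"] by (simp add: fun_eq_iff)
  then have "Xv ?p = 0"
    using Xv_u_zero[OF p] causal_line_constraints(1)[OF p] by (simp add: prod_eq_iff)
  then show ?thesis using X_affine_in_v[OF assms(2)] by simp
qed

end

theorem mainTheorem4:
  fixes V :: "(real \<times> (real^'n)) set"
    and H :: "real \<times> (real^'n) \<Rightarrow> real"
    and W :: "real \<times> (real^'n) \<Rightarrow> real^'n"
    and G M :: "real \<times> (real^'n) \<Rightarrow> (real^'n^'n)"
    and X :: "real \<times> real \<times> (real^'n) \<Rightarrow> real \<times> real \<times> (real^'n)"
  assumes V_open: "open V" and V_conn: "connected V"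
    and H_smooth: "smooth_on V H" and W_smooth: "smooth_on V W" and G_smooth: "smooth_on V G"
    and G_sym: "\<forall>q\<in>V. transpose (G q) = G q"
    and G_pos: "\<forall>q\<in>V. \<forall>y. y \<noteq> 0 \<longrightarrow> y \<bullet> (G q *v y) > 0"
    and M_frame: "\<forall>q\<in>V. G q = transpose (M q) ** M q"
    and X_smooth: "smooth_on {(u, v, x). (u, x) \<in> V} X"
    and X_killing: "killing_on {(u, v, x). (u, x) \<in> V} (gmet H W G) X"
    and X_causal: "\<forall>p\<in>{(u, v, x). (u, x) \<in> V}. gmet H W G p (X p) (X p) \<le> 0"
  shows "\<exists>c::real. \<exists>F2 :: real \<times> (real^'n) \<Rightarrow> real. \<exists>F :: real \<times> (real^'n) \<Rightarrow> real^'n.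
           (\<forall>p\<in>{(u, v, x). (u, x) \<in> V}. gmet H W G p (X p) ellv = c)
         \<and> (\<forall>u v x. (u, x) \<in> V \<longrightarrow>
              X (u, v, x) = c *\<^sub>R nvec H (u, x) + F2 (u, x) *\<^sub>R ellv
                            + (\<Sum>i\<in>UNIV. F (u, x) $ i *\<^sub>R mvec W M (u, x) i))
         \<and> (\<forall>q\<in>V. 2 * c * F2 q + (\<Sum>i\<in>UNIV. (F q $ i)\<^sup>2) \<le> 0)"
proof -
  interpret causal_killing_field V H W G X
    using V_open G_pos smooth_on_differentiable_on[OF X_smooth] X_killing X_causal
    by unfold_locales (simp_all add: slab_def)
  obtain c where c: "\<forall>p\<in>slab V. fst (X p) = c" using Xu_constant[OF V_conn] .
  define B where "B q = fst (snd (X (fst q, 0, snd q)))" for q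
  define Z where "Z q = snd (snd (X (fst q, 0, snd q)))" for q
  have X_eq: "X (u, v, x) = (c, B (u, x), Z (u, x))" if "(u, x) \<in> V" for u v x
    using X_v_invariant[OF V_conn that, of v] c that by (simp add: B_def Z_def prod_eq_iff)
  have frame_inv: "matrix_inv (M q) ** M q = mat 1" if "q \<in> V" for q
  proof (rule frame_left_inverse)
    have "G q = transpose (M q) ** M q" using M_frame that by blast
    then show "\<forall>y. y \<noteq> 0 \<longrightarrow> y \<bullet> ((transpose (M q) ** M q) *v y) > 0" using G_pos that by auto
  qed
  show ?thesis
  proof (intro exI conjI ballI allI impI)
    show "gmet H W G p (X p) ellv = c" if "p \<in> {(u, v, x). (u, x) \<in> V}" for p
    proof -
      have "p \<in> slab V" using that by (simp only: slab_def)
      with c show ?thesis by simp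
    qed
    show "X (u, v, x) = c *\<^sub>R nvec H (u, x) + (B (u, x) + c * H (u, x) + W (u, x) \<bullet> Z (u, x)) *\<^sub>R ellv
            + (\<Sum>i\<in>UNIV. (M (u, x) *v Z (u, x)) $ i *\<^sub>R mvec W M (u, x) i)" if "(u, x) \<in> V" for u v x
      using X_eq[OF that] frame_expansion[where M = M and q = "(u, x)", OF frame_inv[OF that]] by simp
    show "2 * c * (B q + c * H q + W q \<bullet> Z q) + (\<Sum>i\<in>UNIV. ((M q *v Z q) $ i)\<^sup>2) \<le> 0" if "q \<in> V" for q
    proof -
      obtain u x where q: "q = (u, x)" by (cases q)
      have "gmet H W G (u, 0, x) (X (u, 0, x)) (X (u, 0, x)) \<le> 0" using X_causal that q by simp
      moreover have "G (u, x) = transpose (M (u, x)) ** M (u, x)" using M_frame that q by blast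
      ultimately show ?thesis using X_eq[of u x 0] that q by (simp add: gmet_in_frame)
    qed
  qed
qed

end
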